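(* Let $S$ be an intra-regular $\Gamma$-AG$^{**}$-groupoid and $A\subseteq S$ nonempty. Then $A$ is a $\Gamma$-$(1,2)$-ideal of $S$ if and only if $(A\Gamma S)\Gamma (A\Gamma A)=A$ and $A\Gamma A=A$.
   Context: Let $S$ and $\Gamma$ be nonempty sets with a map $S\times\Gamma\times S\to S$, $(x,\gamma,y)\mapsto x\gamma y$. $S$ is a $\Gamma$-AG-groupoid if $(x\gamma y)\delta z=(z\gamma y)\delta x$ for all $x,y,z\in S$, $\gamma,\delta\in\Gamma$; it is a $\Gamma$-AG$^{**}$-groupoid if moreover $a\alpha(b\beta c)=b\alpha(a\beta c)$ for all $a,b,c\in S$, $\alpha,\beta\in\Gamma$. For subsets $A,B\subseteq S$, $A\Gamma B=\{a\gamma b: a\in A,\gamma\in\Gamma,b\in B\}$. $S$ is intra-regular if for every $a\in S$ there exist $x,y\in S$ and $\beta,\gamma,\delta\in\Gamma$ with $a=(x\beta(a\delta a))\gamma y$. A nonempty subset $A$ is a $\Gamma$-$(1,2)$-ideal if $A\Gamma A\subseteq A$ and $(A\Gamma S)\Gamma(A\Gamma A)\subseteq A$. *)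

theory Defs
  imports Main
begin

text \<open>A Gamma-groupoid on S (the type 's) with Gamma (the type 'g) is a ternary map
  f :: 's => 'g => 's => 's, written x gamma y = f x gamma y.\<close>

definition Gamma_AG :: "('s \<Rightarrow> 'g \<Rightarrow> 's \<Rightarrow> 's) \<Rightarrow> bool" where
  "Gamma_AG f \<longleftrightarrow> (\<forall>x y z \<gamma> \<delta>. f (f x \<gamma> y) \<delta> z = f (f z \<gamma> y) \<delta> x)"

definition Gamma_AGss :: "('s \<Rightarrow> 'g \<Rightarrow> 's \<Rightarrow> 's) \<Rightarrow> bool" where
  "Gamma_AGss f \<longleftrightarrow> Gamma_AG f \<and> (\<forall>a b c \<alpha> \<beta>. f a \<alpha> (f b \<beta> c) = f b \<alpha> (f a \<beta> c))"

definition gprod :: "('s \<Rightarrow> 'g \<Rightarrow> 's \<Rightarrow> 's) \<Rightarrow> 's set \<Rightarrow> 's set \<Rightarrow> 's set" where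
  "gprod f A B = {f a \<gamma> b | a \<gamma> b. a \<in> A \<and> b \<in> B}"

definition intra_regular :: "('s \<Rightarrow> 'g \<Rightarrow> 's \<Rightarrow> 's) \<Rightarrow> bool" where
  "intra_regular f \<longleftrightarrow> (\<forall>a. \<exists>x y \<beta> \<gamma> \<delta>. a = f (f x \<beta> (f a \<delta> a)) \<gamma> y)"

definition Gamma_12_ideal :: "('s \<Rightarrow> 'g \<Rightarrow> 's \<Rightarrow> 's) \<Rightarrow> 's set \<Rightarrow> bool" where
  "Gamma_12_ideal f A \<longleftrightarrow> A \<noteq> {} \<and> gprod f A A \<subseteq> A \<and>
     gprod f (gprod f A UNIV) (gprod f A A) \<subseteq> A"

end

theory Submission
  imports Defs
begin

(* The engine is a normal form:
   in an intra-regular Gamma-AG**-groupoid every element satisfies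
   a = (a delta a) gamma t for suitable delta, gamma, t.  Substituting this normal
   form back into itself and rearranging with the left invertive law and the
   left permutation law gives two identities,
     a = (a delta (t gamma t)) gamma (a delta a)   and
     a = ((a delta s) delta (a delta a)) gamma a,  s = (t gamma t) gamma t.
   The first shows that every subset A satisfies A \<subseteq> (A Gamma S) Gamma (A Gamma A);
   the second, combined with (A Gamma S) Gamma (A Gamma A) \<subseteq> A, gives A \<subseteq> A Gamma A. *)

lemma gprodI: "a \<in> A \<Longrightarrow> b \<in> B \<Longrightarrow> f a \<gamma> b \<in> gprod f A B"
  unfolding gprod_def by blast

lemma left_invertive:
  assumes "Gamma_AGss f"
  shows "f (f x \<gamma> y) \<delta> z = f (f z \<gamma> y) \<delta> x"
  using assms unfolding Gamma_AGss_def Gamma_AG_def by blast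

lemma left_permutable:
  assumes "Gamma_AGss f"
  shows "f a \<alpha> (f b \<beta> c) = f b \<alpha> (f a \<beta> c)"
  using assms unfolding Gamma_AGss_def by blast

text \<open>First a = u gamma a is derived from intra-regularity,
  then this is substituted back into the defining equation.\<close>
lemma intra_regular_normal_form:
  fixes f :: "'s \<Rightarrow> 'g \<Rightarrow> 's \<Rightarrow> 's"
  assumes AG: "Gamma_AGss f" and IR: "intra_regular f"
  obtains \<delta> \<gamma> t where "a = f (f a \<delta> a) \<gamma> t"
proof -
  note LI = left_invertive[OF AG] and LP = left_permutable[OF AG]
  obtain x y \<beta> \<gamma> \<delta> where a0: "a = f (f x \<beta> (f a \<delta> a)) \<gamma> y"
    using IR unfolding intra_regular_def by blast
  define w where "w = f y \<delta> a"
  define u where "u = f x \<beta> w"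
  have a1: "a = f (f a \<beta> w) \<gamma> x"
    using a0 unfolding w_def by (simp only: LI[of x \<beta> "f a \<delta> a" \<gamma> y] LP[of y \<beta> a \<delta> a])
  have a_left: "a = f u \<gamma> a"
    using a1 unfolding u_def by (simp only: LI[of a \<beta> w \<gamma> x])
  have "a = f (f (f u \<gamma> a) \<beta> w) \<gamma> x"
    using a1 arg_cong[where f="\<lambda>z. f (f z \<beta> w) \<gamma> x", OF a_left] by simp
  also have "\<dots> = f (f (f w \<gamma> a) \<beta> u) \<gamma> x" by (simp only: LI[of u \<gamma> a \<beta> w])
  also have "\<dots> = f (f x \<beta> u) \<gamma> (f w \<gamma> a)" by (simp only: LI[of "f w \<gamma> a" \<beta> u \<gamma> x])
  also have "\<dots> = f (f x \<beta> u) \<gamma> (f (f a \<delta> a) \<gamma> y)"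
    unfolding w_def by (simp only: LI[of y \<delta> a \<gamma> a])
  also have "\<dots> = f (f a \<delta> a) \<gamma> (f (f x \<beta> u) \<gamma> y)"
    by (simp only: LP[of "f x \<beta> u" \<gamma> "f a \<delta> a" \<gamma> y])
  finally show ?thesis using that by blast
qed

lemma normal_form_ideal_shape:
  assumes AG: "Gamma_AGss f" and e: "a = f (f a \<delta> a) \<gamma> t"
  shows "a = f (f a \<delta> (f t \<gamma> t)) \<gamma> (f a \<delta> a)"
proof -
  note LI = left_invertive[OF AG] and LP = left_permutable[OF AG]
  note e
  also have "f (f a \<delta> a) \<gamma> t = f (f a \<delta> (f (f a \<delta> a) \<gamma> t)) \<gamma> t"
    by (rule arg_cong[where f="\<lambda>z. f (f a \<delta> z) \<gamma> t", OF e])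
  also have "\<dots> = f (f (f a \<delta> a) \<delta> (f a \<gamma> t)) \<gamma> t" by (simp only: LP[of a \<delta> "f a \<delta> a" \<gamma> t])
  also have "\<dots> = f (f t \<delta> (f a \<gamma> t)) \<gamma> (f a \<delta> a)" by (simp only: LI[of "f a \<delta> a" \<delta> "f a \<gamma> t" \<gamma> t])
  also have "\<dots> = f (f a \<delta> (f t \<gamma> t)) \<gamma> (f a \<delta> a)" by (simp only: LP[of t \<delta> a \<gamma> t])
  finally show ?thesis .
qed

lemma normal_form_right_factor:
  assumes AG: "Gamma_AGss f" and e: "a = f (f a \<delta> a) \<gamma> t"
  shows "a = f (f (f a \<delta> (f (f t \<gamma> t) \<gamma> t)) \<delta> (f a \<delta> a)) \<gamma> a"
proof -
  note LI = left_invertive[OF AG] and LP = left_permutable[OF AG]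
  define s where "s = f (f t \<gamma> t) \<gamma> t"
  note e
  also have "f (f a \<delta> a) \<gamma> t = f (f t \<delta> a) \<gamma> a" by (rule LI)
  also have "\<dots> = f (f t \<delta> (f (f a \<delta> a) \<gamma> t)) \<gamma> a"
    by (rule arg_cong[where f="\<lambda>z. f (f t \<delta> z) \<gamma> a", OF e])
  also have "\<dots> = f (f (f a \<delta> a) \<delta> (f t \<gamma> t)) \<gamma> a" by (simp only: LP[of t \<delta> "f a \<delta> a" \<gamma> t])
  also have "\<dots> = f (f (f (f t \<gamma> t) \<delta> a) \<delta> a) \<gamma> a" by (simp only: LI[of a \<delta> a \<delta> "f t \<gamma> t"])
  also have "\<dots> = f (f (f (f t \<gamma> t) \<delta> (f (f a \<delta> a) \<gamma> t)) \<delta> a) \<gamma> a"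
    by (rule arg_cong[where f="\<lambda>z. f (f (f (f t \<gamma> t) \<delta> z) \<delta> a) \<gamma> a", OF e])
  also have "\<dots> = f (f (f (f a \<delta> a) \<delta> s) \<delta> a) \<gamma> a"
    unfolding s_def by (simp only: LP[of "f t \<gamma> t" \<delta> "f a \<delta> a" \<gamma> t])
  also have "\<dots> = f (f (f a \<delta> s) \<delta> (f a \<delta> a)) \<gamma> a" by (simp only: LI[of "f a \<delta> a" \<delta> s \<delta> a])
  finally show ?thesis unfolding s_def .
qed

lemma subset_ideal_product:
  assumes AG: "Gamma_AGss f" and IR: "intra_regular f"
  shows "A \<subseteq> gprod f (gprod f A UNIV) (gprod f A A)"
proof
  fix a assume "a \<in> A"
  obtain \<delta> \<gamma> t where "a = f (f a \<delta> a) \<gamma> t"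
    using intra_regular_normal_form[OF AG IR] by blast
  then have "a = f (f a \<delta> (f t \<gamma> t)) \<gamma> (f a \<delta> a)"
    by (rule normal_form_ideal_shape[OF AG])
  then show "a \<in> gprod f (gprod f A UNIV) (gprod f A A)"
    using \<open>a \<in> A\<close> by (metis gprodI UNIV_I)
qed

lemma subset_square:
  assumes AG: "Gamma_AGss f" and IR: "intra_regular f"
    and closed: "gprod f (gprod f A UNIV) (gprod f A A) \<subseteq> A"
  shows "A \<subseteq> gprod f A A"
proof
  fix a assume aA: "a \<in> A"
  obtain \<delta> \<gamma> t where "a = f (f a \<delta> a) \<gamma> t"
    using intra_regular_normal_form[OF AG IR] by blast
  then have eq: "a = f (f (f a \<delta> (f (f t \<gamma> t) \<gamma> t)) \<delta> (f a \<delta> a)) \<gamma> a"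
    by (rule normal_form_right_factor[OF AG])
  have "f (f a \<delta> (f (f t \<gamma> t) \<gamma> t)) \<delta> (f a \<delta> a) \<in> A"
    using closed aA by (blast intro: gprodI)
  then show "a \<in> gprod f A A"
    using aA by (subst eq) (rule gprodI)
qed

theorem mainTheorem6:
  fixes f :: "'s \<Rightarrow> 'g \<Rightarrow> 's \<Rightarrow> 's" and A :: "'s set"
  assumes "Gamma_AGss f" and "intra_regular f" and "A \<noteq> {}"
  shows "Gamma_12_ideal f A \<longleftrightarrow>
           (gprod f (gprod f A UNIV) (gprod f A A) = A \<and> gprod f A A = A)"
proof
  assume "Gamma_12_ideal f A"
  then have square: "gprod f A A \<subseteq> A"
    and ideal: "gprod f (gprod f A UNIV) (gprod f A A) \<subseteq> A"
    unfolding Gamma_12_ideal_def by auto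
  show "gprod f (gprod f A UNIV) (gprod f A A) = A \<and> gprod f A A = A"
    using square ideal subset_ideal_product[OF assms(1,2)] subset_square[OF assms(1,2) ideal]
    by blast
next
  assume "gprod f (gprod f A UNIV) (gprod f A A) = A \<and> gprod f A A = A"
  then show "Gamma_12_ideal f A"
    using assms(3) unfolding Gamma_12_ideal_def by auto
qed

end
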